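(* Let $\beta>0$ and $d,k\in\mathbb{N}$ with $k\ge1$, and suppose $$1\le\beta\le 1+\tfrac12\log\!\Big(\frac{d}{8\max\{2k,28\}}\Big).$$ Let $P^1,\dots,P^d$ be independent samples from $\mathsf{Beta}(\beta,\beta)$. Then $$\mathbb{E}\Big[\max_{s\subset[d]:\,|s|=k}\ \sum_{j\in s}P^j\Big]\ge \frac34 k.$$
   Context: $\mathsf{Beta}(\alpha,\beta)$ is the distribution on $[0,1]$ with density proportional to $p^{\alpha-1}(1-p)^{\beta-1}$. $\log$ denotes the natural logarithm; $[d]=\{1,\dots,d\}$. *)

theory Defs
  imports "HOL-Probability.Probability"
begin

definition beta_density :: "real \<Rightarrow> real \<Rightarrow> real \<Rightarrow> real" where
  "beta_density a b x =
     (if 0 < x \<and> x < 1 then x powr (a - 1) * (1 - x) powr (b - 1) / Beta a b else 0)"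

definition beta_distr :: "real \<Rightarrow> real \<Rightarrow> real measure" where
  "beta_distr a b = density lborel (\<lambda>x. ennreal (beta_density a b x))"

end

theory Submission
  imports Defs
begin

text \<open>
  Cut \<open>{1..d}\<close> into \<open>k\<close> disjoint blocks of \<open>m = d div k\<close> consecutive indices. Picking
  in each block a coordinate exceeding \<open>t\<close> whenever there is one yields a \<open>k\<close>-subset,
  so for any i.i.d. coordinates in \<open>[0,1]\<close> with distribution function \<open>F\<close> the expected
  maximal \<open>k\<close>-sum is at least \<open>k t (1 - F(t)^m)\<close>. For \<open>Beta(\<beta>,\<beta>)\<close> the bound
  \<open>Beta \<beta> \<beta> \<le> 4 powr (1 - \<beta>)\<close> gives \<open>P(X > 4/5) \<ge> exp (1 - \<beta>) / (5 \<beta>)\<close>, while the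
  hypothesis on \<open>\<beta>\<close> gives \<open>m \<ge> 15 exp (2 (\<beta> - 1))\<close>; hence \<open>F(4/5)^m \<le> exp (-3) \<le> 1/16\<close>
  and the expectation is at least \<open>k \<cdot> 4/5 \<cdot> 15/16 = 3k/4\<close>.
\<close>

lemma Beta_real_pos: "0 < a \<Longrightarrow> 0 < b \<Longrightarrow> 0 < Beta a (b::real)"
  unfolding Beta_def by (simp add: Gamma_real_pos)

lemma beta_density_measurable [measurable]: "beta_density a b \<in> borel_measurable borel"
  unfolding beta_density_def by measurable

lemma sets_beta_distr: "sets (beta_distr a b) = sets borel"
  by (simp add: beta_distr_def)

lemma space_beta_distr [simp]: "space (beta_distr a b) = UNIV"
  by (simp add: beta_distr_def)

lemma emeasure_beta_distr:
  "emeasure (beta_distr a b) A = (\<integral>\<^sup>+x. ennreal (beta_density a b x) * indicator A x \<partial>lborel)"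
  if "A \<in> sets borel"
  unfolding beta_distr_def using that by (simp add: emeasure_density)

lemma prob_space_beta_distr:
  assumes "0 < a" "0 < b"
  shows "prob_space (beta_distr a b)"
proof
  have density: "beta_density a b x = indicator {0..1} x * (x powr (a - 1) * (1 - x) powr (b - 1) / Beta a b)"
    for x
    by (cases "x = 0 \<or> x = 1") (auto simp: beta_density_def indicator_def)
  have "((\<lambda>x. x powr (a - 1) * (1 - x) powr (b - 1) / Beta a b) has_integral 1) {0..1}"
    using has_integral_divide[OF has_integral_Beta_real[OF assms], of "Beta a b"] Beta_real_pos[OF assms]
    by simp
  then have "(\<integral>\<^sup>+x. ennreal (beta_density a b x) \<partial>lborel) = 1"
    unfolding density using Beta_real_pos[OF assms] by (subst nn_integral_has_integral_lebesgue) auto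
  then show "emeasure (beta_distr a b) (space (beta_distr a b)) = 1"
    by (simp add: beta_distr_def emeasure_density)
qed

lemma AE_beta_distr_unit_interval: "AE x in beta_distr a b. 0 \<le> x \<and> x \<le> 1"
  unfolding beta_distr_def by (subst AE_density) (auto simp: beta_density_def)

lemma Beta_symmetric_le:
  fixes \<beta> :: real
  assumes "1 \<le> \<beta>"
  shows "Beta \<beta> \<beta> \<le> (1/4) powr (\<beta> - 1)"
proof (rule has_integral_le)
  show "((\<lambda>x. x powr (\<beta> - 1) * (1 - x) powr (\<beta> - 1)) has_integral Beta \<beta> \<beta>) {0..1}"
    using has_integral_Beta_real[of \<beta> \<beta>] assms by simp
  show "((\<lambda>_. (1/4) powr (\<beta> - 1)) has_integral (1/4) powr (\<beta> - 1)) {0..1::real}"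
    using has_integral_const_real[of "(1/4) powr (\<beta> - 1)" 0 "1::real"] by simp
  fix x :: real assume x: "x \<in> {0..1}"
  have "x * (1 - x) \<le> 1/4"
    using zero_le_power2[of "x - 1/2"] by (simp add: power2_eq_square algebra_simps)
  then have "(x * (1 - x)) powr (\<beta> - 1) \<le> (1/4) powr (\<beta> - 1)"
    using x assms by (intro powr_mono2) auto
  then show "x powr (\<beta> - 1) * (1 - x) powr (\<beta> - 1) \<le> (1/4) powr (\<beta> - 1)"
    using x by (simp add: powr_mult)
qed

lemma beta_density_symmetric_ge:
  assumes "1 \<le> \<beta>" "0 < t" "t \<le> x" "x < 1"
  shows "(4 * t) powr (\<beta> - 1) * (1 - x) powr (\<beta> - 1) \<le> beta_density \<beta> \<beta> x"
proof -
  have "(4 * t) powr (\<beta> - 1) * (1 - x) powr (\<beta> - 1) \<le> (4 * x) powr (\<beta> - 1) * (1 - x) powr (\<beta> - 1)"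
    using assms by (intro mult_right_mono powr_mono2) auto
  also have "\<dots> = x powr (\<beta> - 1) * (1 - x) powr (\<beta> - 1) / (1/4) powr (\<beta> - 1)"
    using assms by (simp add: powr_mult powr_divide)
  also have "\<dots> \<le> x powr (\<beta> - 1) * (1 - x) powr (\<beta> - 1) / Beta \<beta> \<beta>"
    using assms Beta_real_pos[of \<beta> \<beta>] Beta_symmetric_le[of \<beta>] by (intro divide_left_mono) auto
  also have "\<dots> = beta_density \<beta> \<beta> x"
    using assms by (simp add: beta_density_def)
  finally show ?thesis .
qed

lemma has_integral_one_minus_powr:
  fixes a t :: real
  assumes "0 \<le> a" "t \<le> 1"
  shows "((\<lambda>x. (1 - x) powr a) has_integral (1 - t) powr (a + 1) / (a + 1)) {t..1}"
proof -
  define G where "G x = - ((1 - x) powr (a + 1) / (a + 1))" for x :: real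
  have "((\<lambda>x. (1 - x) powr a) has_integral (G 1 - G t)) {t..1}"
  proof (rule fundamental_theorem_of_calculus_interior)
    show "continuous_on {t..1} G"
      unfolding G_def using assms by (intro continuous_intros continuous_on_powr') auto
    fix x assume "x \<in> {t<..<1}"
    then show "(G has_vector_derivative (1 - x) powr a) (at x)"
      unfolding G_def has_real_derivative_iff_has_vector_derivative[symmetric]
      using assms by (auto intro!: derivative_eq_intros)
  qed (use assms in auto)
  then show ?thesis using assms by (simp add: G_def)
qed

lemma beta_distr_tail_ge:
  assumes "1 \<le> \<beta>" "0 < t" "t < 1"
  shows "(4 * t) powr (\<beta> - 1) * (1 - t) powr \<beta> / \<beta> \<le> measure (beta_distr \<beta> \<beta>) {t<..}"
proof -
  interpret prob_space "beta_distr \<beta> \<beta>"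
    using assms by (intro prob_space_beta_distr) auto
  have "((\<lambda>x. (4 * t) powr (\<beta> - 1) * (1 - x) powr (\<beta> - 1)) has_integral
          (4 * t) powr (\<beta> - 1) * (1 - t) powr \<beta> / \<beta>) {t..1}"
    using has_integral_mult_right[OF has_integral_one_minus_powr[of "\<beta> - 1" t]] assms by simp
  then have "ennreal ((4 * t) powr (\<beta> - 1) * (1 - t) powr \<beta> / \<beta>)
      = (\<integral>\<^sup>+x. ennreal (indicator {t..1} x * ((4 * t) powr (\<beta> - 1) * (1 - x) powr (\<beta> - 1))) \<partial>lborel)"
    by (subst nn_integral_has_integral_lebesgue) auto
  also have "\<dots> \<le> (\<integral>\<^sup>+x. ennreal (beta_density \<beta> \<beta> x) * indicator {t<..} x \<partial>lborel)"
  proof (rule nn_integral_mono_AE)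
    show "AE x in lborel. ennreal (indicator {t..1} x * ((4 * t) powr (\<beta> - 1) * (1 - x) powr (\<beta> - 1)))
        \<le> ennreal (beta_density \<beta> \<beta> x) * indicator {t<..} x"
      using AE_lborel_singleton[of t] AE_lborel_singleton[of 1]
      by eventually_elim (use assms beta_density_symmetric_ge[OF assms(1,2)] in
          \<open>auto simp: indicator_def intro!: ennreal_leI\<close>)
  qed
  also have "\<dots> = ennreal (measure (beta_distr \<beta> \<beta>) {t<..})"
    by (simp add: emeasure_beta_distr emeasure_eq_measure[symmetric])
  finally show ?thesis
    by (subst (asm) ennreal_le_iff) auto
qed

lemma beta_distr_tail_four_fifths:
  assumes "1 \<le> \<beta>"
  shows "exp (- (\<beta> - 1)) / (5 * \<beta>) \<le> measure (beta_distr \<beta> \<beta>) {4/5<..}"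
proof -
  have "ln (25/16::real) \<le> 1"
    using ln_le_minus_one[of "25/16::real"] by simp
  then have "exp (- (\<beta> - 1)) \<le> exp ((\<beta> - 1) * ln (16/25))"
    using assms mult_left_mono[of "ln 25 - ln 16" 1 "\<beta> - 1"] by (simp add: ln_div algebra_simps)
  also have "\<dots> = (16/5) powr (\<beta> - 1) * (1/5) powr (\<beta> - 1)"
    by (subst powr_mult[symmetric]) (simp_all add: powr_def mult.commute)
  also have "\<dots> = 5 * ((4 * (4/5)) powr (\<beta> - 1) * (1 - 4/5) powr \<beta>)"
    by (simp add: powr_diff)
  finally have "exp (- (\<beta> - 1)) / 5 / \<beta> \<le> (4 * (4/5)) powr (\<beta> - 1) * (1 - 4/5) powr \<beta> / \<beta>"
    using assms by (intro divide_right_mono) auto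
  also have "\<dots> \<le> measure (beta_distr \<beta> \<beta>) {4/5<..}"
    using beta_distr_tail_ge[OF assms, of "4/5"] by simp
  finally show ?thesis
    by simp
qed

definition max_k_sum :: "nat \<Rightarrow> nat \<Rightarrow> (nat \<Rightarrow> real) \<Rightarrow> real" where
  "max_k_sum d k P = Max {(\<Sum>j\<in>s. P j) | s. s \<subseteq> {1..d} \<and> card s = k}"

lemma max_k_sum_eq_Max_image:
  "max_k_sum d k P = Max ((\<lambda>s. \<Sum>j\<in>s. P j) ` {s. s \<subseteq> {1..d} \<and> card s = k})"
  unfolding max_k_sum_def by (intro arg_cong[where f = Max]) auto

lemma finite_card_subsets: "finite {s. s \<subseteq> {1..d::nat} \<and> card s = k}"
  by (rule finite_subset[of _ "Pow {1..d}"]) auto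

lemma sum_le_max_k_sum:
  assumes "s \<subseteq> {1..d}" "card s = k"
  shows "(\<Sum>j\<in>s. P j) \<le> max_k_sum d k P"
  unfolding max_k_sum_eq_Max_image using assms finite_card_subsets by (intro Max_ge) auto

lemma max_k_sum_bounded:
  assumes "k \<le> d" "\<forall>j\<in>{1..d}. 0 \<le> P j \<and> P j \<le> 1"
  shows "\<bar>max_k_sum d k P\<bar> \<le> real k"
proof -
  have "{1..k} \<in> {s. s \<subseteq> {1..d} \<and> card s = k}"
    using assms by auto
  then obtain s where s: "s \<subseteq> {1..d}" "card s = k" "max_k_sum d k P = (\<Sum>j\<in>s. P j)"
    using Max_in[OF finite_imageI[OF finite_card_subsets]] unfolding max_k_sum_eq_Max_image by blast
  have "0 \<le> (\<Sum>j\<in>s. P j)"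
    using s(1) assms(2) by (intro sum_nonneg) auto
  moreover have "(\<Sum>j\<in>s. P j) \<le> (\<Sum>j\<in>s. 1)"
    using s(1) assms(2) by (intro sum_mono) auto
  ultimately show ?thesis using s by simp
qed

lemma max_k_sum_measurable:
  assumes "sets B = sets borel"
  shows "max_k_sum d k \<in> borel_measurable (PiM {1..d} (\<lambda>_. B))"
  unfolding max_k_sum_eq_Max_image[abs_def]
proof (rule borel_measurable_Max[OF finite_card_subsets])
  fix s assume "s \<in> {s. s \<subseteq> {1..d} \<and> card s = k}"
  then show "(\<lambda>P. \<Sum>j\<in>s. P j) \<in> borel_measurable (PiM {1..d} (\<lambda>_. B))"
    using assms by (auto intro!: borel_measurable_sum simp: measurable_cong_sets[OF refl assms])
qed

definition block :: "nat \<Rightarrow> nat \<Rightarrow> nat set" where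
  "block m b = {b * m + 1..b * m + m}"

lemma card_block [simp]: "card (block m b) = m"
  by (simp add: block_def)

lemma block_subset:
  assumes "b < k" "k * m \<le> d"
  shows "block m b \<subseteq> {1..d}"
proof -
  have "b * m + m \<le> k * m"
    using assms(1) mult_le_mono1[of "Suc b" k m] by simp
  then show ?thesis using assms(2) by (auto simp: block_def)
qed

lemma div_eq_of_mem_block:
  assumes "x \<in> block m b"
  shows "(x - 1) div m = b"
  using assms by (intro div_nat_eqI) (auto simp: block_def algebra_simps)

lemma max_k_sum_ge_block_hits:
  fixes P :: "nat \<Rightarrow> real"
  assumes nonneg: "\<forall>j\<in>{1..d}. 0 \<le> P j" and "k * m \<le> d" "0 < m" "0 \<le> t"
  shows "(\<Sum>b<k. t * of_bool (\<exists>j\<in>block m b. t < P j)) \<le> max_k_sum d k P"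
proof -
  have "\<exists>j\<in>block m b. (\<exists>i\<in>block m b. t < P i) \<longrightarrow> t < P j" for b
  proof (cases "\<exists>i\<in>block m b. t < P i")
    case False
    then show ?thesis using \<open>0 < m\<close> by (intro bexI[of _ "b * m + 1"]) (auto simp: block_def)
  qed blast
  then obtain c where c_block: "\<And>b. c b \<in> block m b"
    and c_hit: "\<And>b. (\<exists>i\<in>block m b. t < P i) \<Longrightarrow> t < P (c b)"
    by metis
  have "inj_on c {..<k}"
    by (rule inj_onI) (metis c_block div_eq_of_mem_block)
  moreover have c_range: "c b \<in> {1..d}" if "b < k" for b
    using c_block block_subset[OF that \<open>k * m \<le> d\<close>] by blast
  ultimately have max_ge: "(\<Sum>b<k. P (c b)) \<le> max_k_sum d k P"
    using sum_le_max_k_sum[of "c ` {..<k}" d k P] by (force simp: card_image sum.reindex)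
  have "(\<Sum>b<k. t * of_bool (\<exists>j\<in>block m b. t < P j)) \<le> (\<Sum>b<k. P (c b))"
  proof (rule sum_mono)
    fix b assume "b \<in> {..<k}"
    then have "0 \<le> P (c b)"
      using nonneg c_range by simp
    then show "t * of_bool (\<exists>j\<in>block m b. t < P j) \<le> P (c b)"
      using c_hit[of b] by (cases "\<exists>j\<in>block m b. t < P j") auto
  qed
  with max_ge show ?thesis
    by linarith
qed

lemma prob_PiM_exists_exceeds:
  fixes t :: real
  assumes B: "prob_space B" "sets B = sets borel" and "finite I" "J \<subseteq> I"
  defines "E \<equiv> {P \<in> space (PiM I (\<lambda>_. B)). \<exists>j\<in>J. t < P j}"
  shows "E \<in> sets (PiM I (\<lambda>_. B))"
    and "measure (PiM I (\<lambda>_. B)) E = 1 - measure B {..t} ^ card J"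
proof -
  interpret B: prob_space B by fact
  interpret finite_product_prob_space "\<lambda>_. B" I
    by unfold_locales (use assms in auto)
  have space_B: "space B = UNIV"
    using sets_eq_imp_space_eq[OF B(2)] by simp
  define A where "A j = (if j \<in> J then {..t} else UNIV)" for j
  have A_sets: "PiE I A \<in> sets (PiM I (\<lambda>_. B))"
    using assms by (intro sets_PiM_I_finite) (auto simp: A_def)
  have E_eq: "E = space (PiM I (\<lambda>_. B)) - PiE I A"
    using \<open>J \<subseteq> I\<close>
    by (auto simp: E_def A_def space_PiM space_B PiE_iff extensional_def not_le split: if_splits)
  then show "E \<in> sets (PiM I (\<lambda>_. B))"
    using A_sets by auto
  have "measure (PiM I (\<lambda>_. B)) (PiE I A) = (\<Prod>j\<in>I. measure B (A j))"
    using assms by (intro prob_times) (auto simp: A_def)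
  also have "\<dots> = (\<Prod>j\<in>J. measure B {..t})"
    using assms B.prob_space space_B
    by (subst prod.mono_neutral_right[of I J]) (auto simp: A_def)
  finally show "measure (PiM I (\<lambda>_. B)) E = 1 - measure B {..t} ^ card J"
    unfolding E_eq using prob_compl[OF A_sets] by simp
qed

lemma expectation_max_k_sum_ge:
  fixes B :: "real measure" and d k m :: nat and t :: real
  assumes B: "prob_space B" "sets B = sets borel" and B_01: "AE x in B. 0 \<le> x \<and> x \<le> 1"
    and "k * m \<le> d" "0 < m" "0 \<le> t"
  shows "real k * t * (1 - measure B {..t} ^ m) \<le> (\<integral>P. max_k_sum d k P \<partial>PiM {1..d} (\<lambda>_. B))"
proof -
  define \<Omega> where "\<Omega> = PiM {1..d} (\<lambda>_. B)"
  define E where "E b = {P \<in> space \<Omega>. \<exists>j\<in>block m b. t < P j}" for b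
  interpret \<Omega>: prob_space \<Omega>
    unfolding \<Omega>_def using B(1) by (rule prob_space_PiM)
  have E_sets: "E b \<in> \<Omega>.events" and prob_E: "\<Omega>.prob (E b) = 1 - measure B {..t} ^ m" if "b < k" for b
    using prob_PiM_exists_exceeds[OF B finite_atLeastAtMost block_subset[OF that \<open>k * m \<le> d\<close>], of t]
    by (simp_all add: \<Omega>_def E_def)
  have "k \<le> k * m"
    using \<open>0 < m\<close> by simp
  then have k_le_d: "k \<le> d"
    using \<open>k * m \<le> d\<close> by linarith
  have \<Omega>_01: "AE P in \<Omega>. \<forall>j\<in>{1..d}. 0 \<le> P j \<and> P j \<le> 1"
    unfolding \<Omega>_def using AE_PiM_component[of "{1..d}" "\<lambda>_. B" _ "\<lambda>x. 0 \<le> x \<and> x \<le> 1"] B B_01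
    by (subst AE_ball_countable) auto
  have int_max: "integrable \<Omega> (max_k_sum d k)"
  proof (rule \<Omega>.integrable_const_bound)
    show "AE P in \<Omega>. norm (max_k_sum d k P) \<le> real k"
      using \<Omega>_01 by eventually_elim (simp add: max_k_sum_bounded[OF k_le_d])
    show "max_k_sum d k \<in> borel_measurable \<Omega>"
      unfolding \<Omega>_def by (rule max_k_sum_measurable[OF B(2)])
  qed
  have int_hit: "integrable \<Omega> (\<lambda>P. t * indicator (E b) P)" if "b < k" for b
    using E_sets[OF that] by (simp add: \<Omega>.emeasure_eq_measure)
  have "real k * t * (1 - measure B {..t} ^ m) = (\<Sum>b<k. t * \<Omega>.prob (E b))"
    using prob_E by simp
  also have "\<dots> = (\<Sum>b<k. \<integral>P. t * indicator (E b) P \<partial>\<Omega>)"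
    using E_sets by (intro sum.cong) (auto simp: Int_absorb2 sets.sets_into_space)
  also have "\<dots> = (\<integral>P. (\<Sum>b<k. t * indicator (E b) P) \<partial>\<Omega>)"
    using int_hit by (intro Bochner_Integration.integral_sum[symmetric]) auto
  also have "\<dots> \<le> (\<integral>P. max_k_sum d k P \<partial>\<Omega>)"
  proof (rule integral_mono_AE[OF _ int_max])
    show "integrable \<Omega> (\<lambda>P. \<Sum>b<k. t * indicator (E b) P)"
      using int_hit by (intro Bochner_Integration.integrable_sum) auto
    show "AE P in \<Omega>. (\<Sum>b<k. t * indicator (E b) P) \<le> max_k_sum d k P"
      using AE_space \<Omega>_01
    proof eventually_elim
      case (elim P)
      then have hit: "indicator (E b) P = of_bool (\<exists>j\<in>block m b. t < P j)" for b
        by (simp add: E_def indicator_def)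
      have "(\<Sum>b<k. t * of_bool (\<exists>j\<in>block m b. t < P j)) \<le> max_k_sum d k P"
        using elim(2) assms(4-6) by (intro max_k_sum_ge_block_hits) auto
      then show ?case
        by (simp only: hit)
    qed
  qed
  finally show ?thesis
    unfolding \<Omega>_def .
qed

lemma div_ge_divide_minus_one:
  fixes d k :: nat
  assumes "0 < k"
  shows "real d / real k - 1 \<le> real (d div k)"
proof -
  have "d < d div k * k + k"
    using mod_less_divisor[OF assms, of d] div_mult_mod_eq[of d k] by linarith
  then have "real d < (real (d div k) + 1) * real k"
    by (simp add: algebra_simps flip: of_nat_mult of_nat_add)
  then have "real d / real k < real (d div k) + 1"
    using assms by (simp add: divide_less_eq)
  then show ?thesis
    by simp
qed

lemma block_length_ge:
  fixes \<beta> :: real and d k :: nat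
  assumes "1 \<le> k" "1 \<le> d" "1 \<le> \<beta>"
    and "\<beta> \<le> 1 + (1/2) * ln (real d / (8 * max (2 * real k) 28))"
  shows "15 * exp (2 * (\<beta> - 1)) \<le> real (d div k)"
proof -
  define L where "L = real d / (8 * max (2 * real k) 28)"
  have "0 < L"
    using assms by (simp add: L_def)
  moreover have "2 * (\<beta> - 1) \<le> ln L"
    using assms(4) by (simp add: L_def)
  ultimately have "exp (2 * (\<beta> - 1)) \<le> L"
    by (metis exp_le_cancel_iff exp_ln)
  moreover have "1 \<le> exp (2 * (\<beta> - 1))"
    using assms(3) by simp
  moreover have "L \<le> real d / (16 * real k)"
    unfolding L_def using assms(1) by (intro divide_left_mono) auto
  moreover have "real d / (16 * real k) = (real d / real k) / 16"
    by simp
  ultimately show ?thesis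
    using div_ge_divide_minus_one[of k d] assms(1) by linarith
qed

lemma exp_minus_three_le: "exp (-3) \<le> (1/16 :: real)"
proof -
  have "(16 :: real) \<le> (27/10) ^ 3"
    by (simp add: power_divide)
  also have "\<dots> \<le> exp 1 ^ 3"
    using e_approx_32 by (intro power_mono) (auto simp: abs_if split: if_splits)
  also have "\<dots> = exp 3"
    by (simp add: exp_of_nat_mult[of 3 1, symmetric])
  finally show ?thesis
    by (simp add: exp_minus field_simps)
qed

lemma beta_distr_atMost_four_fifths_power_le:
  fixes \<beta> :: real and d k :: nat
  assumes "1 \<le> k" "1 \<le> d" "1 \<le> \<beta>"
    and "\<beta> \<le> 1 + (1/2) * ln (real d / (8 * max (2 * real k) 28))"
  shows "measure (beta_distr \<beta> \<beta>) {..4/5} ^ (d div k) \<le> 1/16"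
proof -
  define B where "B = beta_distr \<beta> \<beta>"
  define m where "m = d div k"
  define Q where "Q = measure B {4/5<..}"
  interpret B: prob_space B
    unfolding B_def using assms(3) by (intro prob_space_beta_distr) auto
  have "3 \<le> 3 * exp (\<beta> - 1) / \<beta>"
    using exp_ge_add_one_self[of "\<beta> - 1"] assms(3) by (simp add: le_divide_eq)
  also have "\<dots> = exp (- (\<beta> - 1)) / (5 * \<beta>) * (15 * exp (2 * (\<beta> - 1)))"
    by (simp add: field_simps flip: exp_add)
  also have "\<dots> \<le> Q * real m"
    using beta_distr_tail_four_fifths[OF assms(3)] block_length_ge[OF assms]
    by (intro mult_mono) (auto simp: Q_def B_def m_def)
  finally have Qm: "3 \<le> Q * real m" .
  then have "0 < m"
    by (cases m) auto
  have "measure B {..4/5} = 1 - Q"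
    using B.prob_compl[of "{4/5<..}"] by (simp add: Q_def B_def sets_beta_distr Diff_eq not_less)
  then have "measure B {..4/5} ^ m \<le> exp (- (Q * real m))"
    using exp_ge_one_minus_x_over_n_power_n[of "Q * real m" m] \<open>0 < m\<close> B.prob_le_1[of "{4/5<..}"]
    by (simp add: Q_def)
  also have "\<dots> \<le> 1/16"
    using Qm exp_minus_three_le by (meson exp_le_cancel_iff neg_le_iff_le order.trans)
  finally show ?thesis
    unfolding B_def m_def .
qed

theorem proposition2p2:
  fixes \<beta> :: real and d k :: nat
  assumes "\<beta> > 0" and "k \<ge> 1" and "d \<ge> 1"
    and "1 \<le> \<beta>"
    and "\<beta> \<le> 1 + (1/2) * ln (real d / (8 * max (2 * real k) 28))"
  shows "(\<integral>P. Max {(\<Sum>j\<in>s. P j) | s. s \<subseteq> {1..d} \<and> card s = k}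
            \<partial>(PiM {1..d} (\<lambda>_. beta_distr \<beta> \<beta>))) \<ge> (3/4) * real k"
proof -
  define m where "m = d div k"
  have "0 < exp (2 * (\<beta> - 1))"
    by simp
  then have "0 < m"
    using block_length_ge[OF assms(2-5)] unfolding m_def by linarith
  have "15/16 \<le> 1 - measure (beta_distr \<beta> \<beta>) {..4/5} ^ m"
    using beta_distr_atMost_four_fifths_power_le[OF assms(2-5)] by (simp add: m_def)
  then have "(3/4) * real k \<le> real k * (4/5) * (1 - measure (beta_distr \<beta> \<beta>) {..4/5} ^ m)"
    using mult_left_mono[of "15/16" _ "real k * (4/5)"] by simp
  also have "\<dots> \<le> (\<integral>P. max_k_sum d k P \<partial>PiM {1..d} (\<lambda>_. beta_distr \<beta> \<beta>))"
    using prob_space_beta_distr assms(1) AE_beta_distr_unit_interval \<open>0 < m\<close>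
    by (intro expectation_max_k_sum_ge) (simp_all add: m_def sets_beta_distr times_div_less_eq_dividend)
  finally show ?thesis
    unfolding max_k_sum_def .
qed

end
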